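(* Let $\{R_\alpha\}$ be a collection of rings. Then the direct product $R=\prod_\alpha R_\alpha$ is weakly $r$-clean if and only if each $R_\alpha$ is weakly $r$-clean and at most one $R_\alpha$ is not $r$-clean.
   Context: Rings are associative with identity. $Idem(R)$ denotes the idempotents and $Reg(R)=\{r\in R: r=ryr \text{ for some } y\in R\}$ the regular elements of $R$. A ring is $r$-clean if every element is of the form $r+e$ with $r\in Reg(R)$, $e\in Idem(R)$. An element $x$ is weakly $r$-clean if $x=r+e$ or $x=r-e$ for some $r\in Reg(R)$, $e\in Idem(R)$; a ring is weakly $r$-clean if all its elements are. *)

theory Defs
  imports "HOL-Algebra.Ring"
begin

definition product_ring :: "'i set \<Rightarrow> ('i \<Rightarrow> ('a, 'c) ring_scheme) \<Rightarrow> ('i \<Rightarrow> 'a) ring"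
  where "product_ring I R \<equiv>
    \<lparr>carrier = (\<Pi>\<^sub>E i\<in>I. carrier (R i)),
     monoid.mult = (\<lambda>x y. (\<lambda>i\<in>I. x i \<otimes>\<^bsub>R i\<^esub> y i)),
     one = (\<lambda>i\<in>I. \<one>\<^bsub>R i\<^esub>),
     zero = (\<lambda>i\<in>I. \<zero>\<^bsub>R i\<^esub>),
     add = (\<lambda>x y. (\<lambda>i\<in>I. x i \<oplus>\<^bsub>R i\<^esub> y i))\<rparr>"

definition Idem_elems :: "('a, 'c) ring_scheme \<Rightarrow> 'a set"
  where "Idem_elems R = {e \<in> carrier R. mult R e e = e}"

definition Reg_elems :: "('a, 'c) ring_scheme \<Rightarrow> 'a set"
  where "Reg_elems R = {r \<in> carrier R. \<exists>y \<in> carrier R. r = mult R (mult R r y) r}"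

definition r_clean :: "('a, 'c) ring_scheme \<Rightarrow> bool"
  where "r_clean R \<longleftrightarrow> (\<forall>x \<in> carrier R. \<exists>r \<in> Reg_elems R. \<exists>e \<in> Idem_elems R. x = add R r e)"

definition weakly_r_clean_elem :: "('a, 'c) ring_scheme \<Rightarrow> 'a \<Rightarrow> bool"
  where "weakly_r_clean_elem R x \<longleftrightarrow>
    (\<exists>r \<in> Reg_elems R. \<exists>e \<in> Idem_elems R. x = add R r e \<or> x = a_minus R r e)"

definition weakly_r_clean :: "('a, 'c) ring_scheme \<Rightarrow> bool"
  where "weakly_r_clean R \<longleftrightarrow> (\<forall>x \<in> carrier R. weakly_r_clean_elem R x)"

end

theory Submission
  imports Defs
begin

text \<open>
  Since \<open>x = r - e\<close> iff \<open>-x = (-r) + e\<close> and \<open>-r\<close> is regular with \<open>r\<close>, an element is weakly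
  r-clean iff \<open>x\<close> or \<open>-x\<close> is r-clean. In the product, r-cleanness is coordinatewise, so
  \<open>x\<close> is weakly r-clean iff all coordinates \<open>x i\<close> are r-clean or all \<open>-x i\<close> are.
  If \<open>a\<close> and \<open>b\<close> are not r-clean in two different factors, the element with coordinates \<open>a\<close>
  and \<open>-b\<close> and zero elsewhere violates both alternatives. Conversely, if only the factor
  \<open>R k\<close> may fail to be r-clean, the sign is dictated by the coordinate \<open>x k\<close>, and every
  other coordinate is r-clean together with its negative.
\<close>

definition r_clean_elem :: "('a, 'c) ring_scheme \<Rightarrow> 'a \<Rightarrow> bool"
  where "r_clean_elem R x \<longleftrightarrow> (\<exists>r \<in> Reg_elems R. \<exists>e \<in> Idem_elems R. x = r \<oplus>\<^bsub>R\<^esub> e)"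

lemma r_clean_iff_r_clean_elem: "r_clean R \<longleftrightarrow> (\<forall>x \<in> carrier R. r_clean_elem R x)"
  by (simp add: r_clean_def r_clean_elem_def)

lemma (in ring) Reg_elems_a_inv:
  assumes "r \<in> Reg_elems R"
  shows "\<ominus> r \<in> Reg_elems R"
proof -
  obtain y where y: "y \<in> carrier R" "r \<in> carrier R" "r = r \<otimes> y \<otimes> r"
    using assms by (auto simp: Reg_elems_def)
  have "\<ominus> r = (\<ominus> r) \<otimes> (\<ominus> y) \<otimes> (\<ominus> r)"
    using y by (simp add: l_minus r_minus)
  then show ?thesis
    using y by (auto simp: Reg_elems_def)
qed

lemma (in ring) weakly_r_clean_elem_iff:
  assumes x: "x \<in> carrier R"
  shows "weakly_r_clean_elem R x \<longleftrightarrow> r_clean_elem R x \<or> r_clean_elem R (\<ominus> x)"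
proof -
  have "(\<exists>r \<in> Reg_elems R. \<exists>e \<in> Idem_elems R. x = r \<ominus> e) \<longleftrightarrow> r_clean_elem R (\<ominus> x)"
  proof
    assume "\<exists>r \<in> Reg_elems R. \<exists>e \<in> Idem_elems R. x = r \<ominus> e"
    then obtain r e where re: "r \<in> Reg_elems R" "e \<in> Idem_elems R" "x = r \<ominus> e" by blast
    then have "\<ominus> x = \<ominus> r \<oplus> e"
      by (auto simp: Reg_elems_def Idem_elems_def a_minus_def minus_add)
    then show "r_clean_elem R (\<ominus> x)"
      using re Reg_elems_a_inv unfolding r_clean_elem_def by blast
  next
    assume "r_clean_elem R (\<ominus> x)"
    then obtain r e where re: "r \<in> Reg_elems R" "e \<in> Idem_elems R" "\<ominus> x = r \<oplus> e"
      unfolding r_clean_elem_def by blast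
    have "r \<in> carrier R" "e \<in> carrier R"
      using re by (auto simp: Reg_elems_def Idem_elems_def)
    then have "x = \<ominus> r \<ominus> e"
      using x re(3) by (metis minus_minus minus_add a_minus_def)
    then show "\<exists>r \<in> Reg_elems R. \<exists>e \<in> Idem_elems R. x = r \<ominus> e"
      using re Reg_elems_a_inv by blast
  qed
  then show ?thesis
    unfolding weakly_r_clean_elem_def r_clean_elem_def by blast
qed

lemma product_ring_simps [simp]:
  "carrier (product_ring I R) = (\<Pi>\<^sub>E i\<in>I. carrier (R i))"
  "mult (product_ring I R) x y = (\<lambda>i\<in>I. x i \<otimes>\<^bsub>R i\<^esub> y i)"
  "add (product_ring I R) x y = (\<lambda>i\<in>I. x i \<oplus>\<^bsub>R i\<^esub> y i)"
  "zero (product_ring I R) = (\<lambda>i\<in>I. \<zero>\<^bsub>R i\<^esub>)"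
  "one (product_ring I R) = (\<lambda>i\<in>I. \<one>\<^bsub>R i\<^esub>)"
  by (simp_all add: product_ring_def)

lemma restrict_eq_extensional_iff:
  "x \<in> extensional I \<Longrightarrow> restrict f I = x \<longleftrightarrow> (\<forall>i\<in>I. f i = x i)"
  by (auto intro: extensionalityI[where A = I])

lemma Reg_elems_product_ring:
  "r \<in> Reg_elems (product_ring I R) \<longleftrightarrow> r \<in> extensional I \<and> (\<forall>i\<in>I. r i \<in> Reg_elems (R i))"
proof
  assume "r \<in> Reg_elems (product_ring I R)"
  then obtain y where ry: "r \<in> carrier (product_ring I R)" "y \<in> carrier (product_ring I R)"
    and eq: "r = r \<otimes>\<^bsub>product_ring I R\<^esub> y \<otimes>\<^bsub>product_ring I R\<^esub> r"
    unfolding Reg_elems_def by blast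
  have "r i \<in> Reg_elems (R i)" if i: "i \<in> I" for i
  proof -
    have "r i = (r \<otimes>\<^bsub>product_ring I R\<^esub> y \<otimes>\<^bsub>product_ring I R\<^esub> r) i"
      by (rule fun_cong[OF eq])
    also have "\<dots> = r i \<otimes>\<^bsub>R i\<^esub> y i \<otimes>\<^bsub>R i\<^esub> r i"
      using i by simp
    finally have "r i = r i \<otimes>\<^bsub>R i\<^esub> y i \<otimes>\<^bsub>R i\<^esub> r i" .
    moreover have "r i \<in> carrier (R i)" "y i \<in> carrier (R i)"
      using ry i by auto
    ultimately show ?thesis
      unfolding Reg_elems_def by blast
  qed
  with ry show "r \<in> extensional I \<and> (\<forall>i\<in>I. r i \<in> Reg_elems (R i))"
    by (auto simp: PiE_iff)
next
  assume r: "r \<in> extensional I \<and> (\<forall>i\<in>I. r i \<in> Reg_elems (R i))"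
  then have "\<forall>i\<in>I. \<exists>yi. yi \<in> carrier (R i) \<and> r i = r i \<otimes>\<^bsub>R i\<^esub> yi \<otimes>\<^bsub>R i\<^esub> r i"
    unfolding Reg_elems_def by blast
  from bchoice[OF this] obtain y
    where y: "\<forall>i\<in>I. y i \<in> carrier (R i) \<and> r i = r i \<otimes>\<^bsub>R i\<^esub> y i \<otimes>\<^bsub>R i\<^esub> r i" ..
  have "r = r \<otimes>\<^bsub>product_ring I R\<^esub> restrict y I \<otimes>\<^bsub>product_ring I R\<^esub> r"
  proof (rule extensionalityI[where A = I])
    fix i assume i: "i \<in> I"
    have "r i = r i \<otimes>\<^bsub>R i\<^esub> y i \<otimes>\<^bsub>R i\<^esub> r i"
      using y i by blast
    also have "\<dots> = (r \<otimes>\<^bsub>product_ring I R\<^esub> restrict y I \<otimes>\<^bsub>product_ring I R\<^esub> r) i"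
      using i by simp
    finally show "r i = (r \<otimes>\<^bsub>product_ring I R\<^esub> restrict y I \<otimes>\<^bsub>product_ring I R\<^esub> r) i" .
  qed (use r in auto)
  moreover have "\<forall>i\<in>I. r i \<in> carrier (R i)"
    using r unfolding Reg_elems_def by blast
  then have "r \<in> carrier (product_ring I R)" "restrict y I \<in> carrier (product_ring I R)"
    using r y by (auto simp: PiE_iff)
  ultimately show "r \<in> Reg_elems (product_ring I R)"
    unfolding Reg_elems_def by blast
qed

lemma Idem_elems_product_ring:
  "e \<in> Idem_elems (product_ring I R) \<longleftrightarrow> e \<in> extensional I \<and> (\<forall>i\<in>I. e i \<in> Idem_elems (R i))"
  unfolding Idem_elems_def by (auto simp: PiE_iff restrict_eq_extensional_iff)

lemma r_clean_elem_product_ring: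
  assumes x: "x \<in> carrier (product_ring I R)"
  shows "r_clean_elem (product_ring I R) x \<longleftrightarrow> (\<forall>i\<in>I. r_clean_elem (R i) (x i))"
proof
  assume "r_clean_elem (product_ring I R) x"
  then obtain r e where "r \<in> Reg_elems (product_ring I R)" "e \<in> Idem_elems (product_ring I R)"
    and "x = r \<oplus>\<^bsub>product_ring I R\<^esub> e"
    unfolding r_clean_elem_def by blast
  then have "\<forall>i\<in>I. r i \<in> Reg_elems (R i) \<and> e i \<in> Idem_elems (R i) \<and> x i = r i \<oplus>\<^bsub>R i\<^esub> e i"
    by (simp add: Reg_elems_product_ring Idem_elems_product_ring)
  then show "\<forall>i\<in>I. r_clean_elem (R i) (x i)"
    unfolding r_clean_elem_def by blast
next
  assume "\<forall>i\<in>I. r_clean_elem (R i) (x i)"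
  then have "\<forall>i\<in>I. \<exists>r. r \<in> Reg_elems (R i) \<and> (\<exists>e \<in> Idem_elems (R i). x i = r \<oplus>\<^bsub>R i\<^esub> e)"
    unfolding r_clean_elem_def by blast
  from bchoice[OF this] obtain r
    where r: "\<forall>i\<in>I. r i \<in> Reg_elems (R i) \<and> (\<exists>e \<in> Idem_elems (R i). x i = r i \<oplus>\<^bsub>R i\<^esub> e)" ..
  then have "\<forall>i\<in>I. \<exists>e. e \<in> Idem_elems (R i) \<and> x i = r i \<oplus>\<^bsub>R i\<^esub> e"
    by blast
  from bchoice[OF this] obtain e
    where e: "\<forall>i\<in>I. e i \<in> Idem_elems (R i) \<and> x i = r i \<oplus>\<^bsub>R i\<^esub> e i" ..
  let ?r = "restrict r I" and ?e = "restrict e I"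
  have "x = ?r \<oplus>\<^bsub>product_ring I R\<^esub> ?e"
    using x e by (auto simp: PiE_iff intro: extensionalityI[where A = I])
  moreover have "?r \<in> Reg_elems (product_ring I R)" "?e \<in> Idem_elems (product_ring I R)"
    using r e by (simp_all add: Reg_elems_product_ring Idem_elems_product_ring)
  ultimately show "r_clean_elem (product_ring I R) x"
    unfolding r_clean_elem_def by blast
qed

locale ring_family =
  fixes I :: "'i set" and R :: "'i \<Rightarrow> ('a, 'c) ring_scheme"
  assumes ring_member: "i \<in> I \<Longrightarrow> ring (R i)"
begin

lemma ring_product_ring: "ring (product_ring I R)"
proof (rule ringI)
  note componentwise = PiE_iff restrict_eq_extensional_iff ring.ring_simprules ring.is_monoid
  show "abelian_group (product_ring I R)"
  proof (rule abelian_groupI)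
    fix x assume "x \<in> carrier (product_ring I R)"
    then show "\<exists>y\<in>carrier (product_ring I R). y \<oplus>\<^bsub>product_ring I R\<^esub> x = \<zero>\<^bsub>product_ring I R\<^esub>"
      using ring_member by (intro bexI[of _ "\<lambda>i\<in>I. \<ominus>\<^bsub>R i\<^esub> x i"]) (auto simp: componentwise)
  qed (use ring_member in \<open>auto intro!: restrict_ext simp: componentwise\<close>)
  show "monoid (product_ring I R)"
    by (rule monoidI) (use ring_member in \<open>auto intro!: restrict_ext simp: componentwise\<close>)
qed (use ring_member in \<open>auto intro!: restrict_ext simp: PiE_iff ring.ring_simprules\<close>)

lemma product_ring_a_inv:
  assumes x: "x \<in> carrier (product_ring I R)"
  shows "\<ominus>\<^bsub>product_ring I R\<^esub> x = (\<lambda>i\<in>I. \<ominus>\<^bsub>R i\<^esub> x i)"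
proof (rule abelian_group.minus_equality)
  show "abelian_group (product_ring I R)"
    using ring_product_ring by (rule ring.is_abelian_group)
qed (use x ring_member in \<open>auto simp: PiE_iff restrict_eq_extensional_iff ring.ring_simprules\<close>)

lemma weakly_r_clean_elem_product_ring:
  assumes x: "x \<in> carrier (product_ring I R)"
  shows "weakly_r_clean_elem (product_ring I R) x \<longleftrightarrow>
    (\<forall>i\<in>I. r_clean_elem (R i) (x i)) \<or> (\<forall>i\<in>I. r_clean_elem (R i) (\<ominus>\<^bsub>R i\<^esub> x i))"
proof -
  interpret P: ring "product_ring I R"
    by (rule ring_product_ring)
  have "r_clean_elem (product_ring I R) (\<ominus>\<^bsub>product_ring I R\<^esub> x) \<longleftrightarrow>
      (\<forall>i\<in>I. r_clean_elem (R i) (\<ominus>\<^bsub>R i\<^esub> x i))"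
    using r_clean_elem_product_ring[OF P.a_inv_closed[OF x]]
    by (simp add: product_ring_a_inv[OF x])
  then show ?thesis
    using P.weakly_r_clean_elem_iff[OF x] r_clean_elem_product_ring[OF x] by blast
qed

lemma weakly_r_clean_factor:
  assumes W: "weakly_r_clean (product_ring I R)" and i: "i \<in> I"
  shows "weakly_r_clean (R i)"
  unfolding weakly_r_clean_def
proof
  fix a assume a: "a \<in> carrier (R i)"
  let ?x = "\<lambda>k\<in>I. if k = i then a else \<zero>\<^bsub>R k\<^esub>"
  have x: "?x \<in> carrier (product_ring I R)"
    using a ring_member by (auto simp: ring.ring_simprules)
  with W have "weakly_r_clean_elem (product_ring I R) ?x"
    unfolding weakly_r_clean_def by blast
  then have "(\<forall>k\<in>I. r_clean_elem (R k) (?x k)) \<or> (\<forall>k\<in>I. r_clean_elem (R k) (\<ominus>\<^bsub>R k\<^esub> ?x k))"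
    by (rule weakly_r_clean_elem_product_ring[OF x, THEN iffD1])
  then have "r_clean_elem (R i) a \<or> r_clean_elem (R i) (\<ominus>\<^bsub>R i\<^esub> a)"
    using i by auto
  then show "weakly_r_clean_elem (R i) a"
    unfolding ring.weakly_r_clean_elem_iff[OF ring_member[OF i] a] .
qed

lemma non_r_clean_factor_unique:
  assumes W: "weakly_r_clean (product_ring I R)"
    and i: "i \<in> I" "\<not> r_clean (R i)" and j: "j \<in> I" "\<not> r_clean (R j)"
  shows "i = j"
proof (rule ccontr)
  assume ij: "i \<noteq> j"
  obtain a where a: "a \<in> carrier (R i)" "\<not> r_clean_elem (R i) a"
    using i(2) r_clean_iff_r_clean_elem by blast
  obtain b where b: "b \<in> carrier (R j)" "\<not> r_clean_elem (R j) b"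
    using j(2) r_clean_iff_r_clean_elem by blast
  let ?x = "\<lambda>k\<in>I. if k = i then a else if k = j then \<ominus>\<^bsub>R j\<^esub> b else \<zero>\<^bsub>R k\<^esub>"
  have x: "?x \<in> carrier (product_ring I R)"
    using a b j ring_member by (auto simp: ring.ring_simprules)
  with W have "weakly_r_clean_elem (product_ring I R) ?x"
    unfolding weakly_r_clean_def by blast
  then have "(\<forall>k\<in>I. r_clean_elem (R k) (?x k)) \<or> (\<forall>k\<in>I. r_clean_elem (R k) (\<ominus>\<^bsub>R k\<^esub> ?x k))"
    by (rule weakly_r_clean_elem_product_ring[OF x, THEN iffD1])
  then have "r_clean_elem (R i) a \<or> r_clean_elem (R j) (\<ominus>\<^bsub>R j\<^esub> (\<ominus>\<^bsub>R j\<^esub> b))"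
    using i j ij by auto
  moreover have "\<ominus>\<^bsub>R j\<^esub> (\<ominus>\<^bsub>R j\<^esub> b) = b"
    using b ring_member[OF j(1)] by (simp add: ring.ring_simprules)
  ultimately show False
    using a b by simp
qed

lemma weakly_r_clean_product_ringI:
  assumes W: "\<forall>i \<in> I. weakly_r_clean (R i)"
    and unique: "\<forall>i \<in> I. \<forall>j \<in> I. \<not> r_clean (R i) \<and> \<not> r_clean (R j) \<longrightarrow> i = j"
  shows "weakly_r_clean (product_ring I R)"
  unfolding weakly_r_clean_def
proof
  fix x assume x: "x \<in> carrier (product_ring I R)"
  have xi: "x i \<in> carrier (R i)" if "i \<in> I" for i
    using x that by (auto simp: PiE_iff)
  have both: "r_clean_elem (R i) (x i) \<and> r_clean_elem (R i) (\<ominus>\<^bsub>R i\<^esub> x i)"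
    if "i \<in> I" "r_clean (R i)" for i
    using that xi[OF that(1)] ring_member[OF that(1)]
    by (simp add: r_clean_iff_r_clean_elem ring.ring_simprules)
  have "(\<forall>i\<in>I. r_clean_elem (R i) (x i)) \<or> (\<forall>i\<in>I. r_clean_elem (R i) (\<ominus>\<^bsub>R i\<^esub> x i))"
  proof (cases "\<forall>i\<in>I. r_clean (R i)")
    case True
    then show ?thesis
      using both by blast
  next
    case False
    then obtain k where k: "k \<in> I" "\<not> r_clean (R k)" by blast
    then have others: "r_clean (R i)" if "i \<in> I" "i \<noteq> k" for i
      using unique that by blast
    have "weakly_r_clean_elem (R k) (x k)"
      using W k xi unfolding weakly_r_clean_def by blast
    then consider "r_clean_elem (R k) (x k)" | "r_clean_elem (R k) (\<ominus>\<^bsub>R k\<^esub> x k)"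
      unfolding ring.weakly_r_clean_elem_iff[OF ring_member[OF k(1)] xi[OF k(1)]] by blast
    then show ?thesis
    proof cases
      case 1
      have "r_clean_elem (R i) (x i)" if "i \<in> I" for i
        using 1 both others that by (cases "i = k") auto
      then show ?thesis by blast
    next
      case 2
      have "r_clean_elem (R i) (\<ominus>\<^bsub>R i\<^esub> x i)" if "i \<in> I" for i
        using 2 both others that by (cases "i = k") auto
      then show ?thesis by blast
    qed
  qed
  then show "weakly_r_clean_elem (product_ring I R) x"
    by (rule weakly_r_clean_elem_product_ring[OF x, THEN iffD2])
qed

end

theorem theorem2p3:
  fixes I :: "'i set" and R :: "'i \<Rightarrow> ('a, 'c) ring_scheme"
  assumes "\<And>i. i \<in> I \<Longrightarrow> ring (R i)"
  shows "weakly_r_clean (product_ring I R) \<longleftrightarrow>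
           ((\<forall>i \<in> I. weakly_r_clean (R i)) \<and>
            (\<forall>i \<in> I. \<forall>j \<in> I. \<not> r_clean (R i) \<and> \<not> r_clean (R j) \<longrightarrow> i = j))"
proof -
  interpret ring_family I R
    using assms by (rule ring_family.intro)
  show ?thesis
    using weakly_r_clean_factor non_r_clean_factor_unique weakly_r_clean_product_ringI by blast
qed

end
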